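(* Let $R=k[x_1,\dots,x_n]$, $f_1,\dots,f_m\in R$, $I=\langle f_1,\dots,f_m\rangle$, with fixed term orders on $R$ and $R^m$. Let $G$ be a finite set of polynomials in $I$ with $\{f_1^{[\mathbf e_1]},\dots,f_m^{[\mathbf e_m]}\}\subset G$. If for every critical pair of elements of $G$ its S-polynomial has a standard representation w.r.t. $G$, then $G$ is a labeled Gröbner basis for $I$.
   Context: Let $\mathbf f=(f_1,\dots,f_m)$; a polynomial in $I$ is a pair $f^{[\mathbf u]}$ with $\mathbf u\in R^m$ and $f=\mathbf u\cdot\mathbf f$, with operations $f^{[\mathbf u]}+g^{[\mathbf v]}=(f+g)^{[\mathbf u+\mathbf v]}$, $ct(f^{[\mathbf u]})=(ctf)^{[ct\mathbf u]}$. $\mathbf e_i$ is the $i$-th unit vector. $\mathrm{lpp},\mathrm{lc}$ are leading power product and coefficient (both orders denoted $\prec$), with $\mathrm{lpp}(0)=0\prec$ all nonzero power products. A module monomial $x^\alpha\mathbf e_i$ divides $x^\beta\mathbf e_j$ iff $i=j$ and $x^\alpha\mid x^\beta$. Critical pair: for $g^{[\mathbf v]},h^{[\mathbf w]}$ with $g,h\ne0$, $t=\mathrm{lcm}(\mathrm{lpp}(g),\mathrm{lpp}(h))$, $t_g=t/\mathrm{lpp}(g)$, $t_h=t/\mathrm{lpp}(h)$; if $\mathrm{lpp}(t_g\mathbf v)\succeq\mathrm{lpp}(t_h\mathbf w)$ then $(t_g,g^{[\mathbf v]},t_h,h^{[\mathbf w]})$ is a critical pair, with S-polynomial $t_g(g^{[\mathbf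 v]})-c\,t_h(h^{[\mathbf w]})$, $c=\mathrm{lc}(g)/\mathrm{lc}(h)$. A polynomial $f^{[\mathbf u]}$ in $I$ has a standard representation w.r.t. $B$ if there are $p_i\in R$ and $g_i^{[\mathbf v_i]}\in B$ with $f=\sum_i p_ig_i$, $\mathrm{lpp}(f)\succeq\mathrm{lpp}(p_ig_i)$ and $\mathrm{lpp}(\mathbf u)\succeq\mathrm{lpp}(p_i\mathbf v_i)$ for all $i$. $G$ is a labeled Gröbner basis for $I$ if for every $f^{[\mathbf u]}$ in $I$ with $f\ne0$ there is $g^{[\mathbf v]}\in G$ with $\mathrm{lpp}(g)\mid\mathrm{lpp}(f)$ and $\mathrm{lpp}(t\mathbf v)\preceq\mathrm{lpp}(\mathbf u)$, $t=\mathrm{lpp}(f)/\mathrm{lpp}(g)$. *)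

theory Defs
  imports "HOL-Library.Poly_Mapping"
begin

(* Elements of R^m: functions nat \<Rightarrow> polynomial, zero at indices \<ge> m (indices 0..m-1).
   Module monomials x^\<alpha> e_i: pairs (\<alpha>, i) with i < m. *)

type_synonym 'v pp = "'v \<Rightarrow>\<^sub>0 nat"
type_synonym ('v, 'k) mpoly = "'v pp \<Rightarrow>\<^sub>0 'k"
type_synonym ('v, 'k) mvec = "nat \<Rightarrow> ('v, 'k) mpoly"
type_synonym ('v, 'k) lpoly = "('v, 'k) mpoly \<times> ('v, 'k) mvec"

definition pp_term_order :: "('v pp \<Rightarrow> 'v pp \<Rightarrow> bool) \<Rightarrow> bool" where
  "pp_term_order le \<longleftrightarrow>
     (\<forall>a. le a a) \<and> (\<forall>a b c. le a b \<longrightarrow> le b c \<longrightarrow> le a c) \<and>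
     (\<forall>a b. le a b \<longrightarrow> le b a \<longrightarrow> a = b) \<and> (\<forall>a b. le a b \<or> le b a) \<and>
     (\<forall>a b c. le a b \<longrightarrow> le (c + a) (c + b)) \<and> (\<forall>a. le 0 a) \<and>
     (\<forall>S. S \<noteq> {} \<longrightarrow> (\<exists>x\<in>S. \<forall>y\<in>S. le x y))"

definition mod_term_order :: "nat \<Rightarrow> ('v pp \<times> nat \<Rightarrow> 'v pp \<times> nat \<Rightarrow> bool) \<Rightarrow> bool" where
  "mod_term_order m le \<longleftrightarrow>
     (let M = {s. snd s < m} in
     (\<forall>a\<in>M. le a a) \<and> (\<forall>a\<in>M. \<forall>b\<in>M. \<forall>c\<in>M. le a b \<longrightarrow> le b c \<longrightarrow> le a c) \<and>
     (\<forall>a\<in>M. \<forall>b\<in>M. le a b \<longrightarrow> le b a \<longrightarrow> a = b) \<and> (\<forall>a\<in>M. \<forall>b\<in>M. le a b \<or> le b a) \<and>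
     (\<forall>\<alpha> i \<beta> j \<gamma>. i < m \<longrightarrow> j < m \<longrightarrow> le (\<alpha>, i) (\<beta>, j) \<longrightarrow> le (\<gamma> + \<alpha>, i) (\<gamma> + \<beta>, j)) \<and>
     (\<forall>\<alpha> \<gamma> i. i < m \<longrightarrow> le (\<alpha>, i) (\<gamma> + \<alpha>, i)) \<and>
     (\<forall>S. S \<subseteq> M \<longrightarrow> S \<noteq> {} \<longrightarrow> (\<exists>x\<in>S. \<forall>y\<in>S. le x y)))"

(* leading power product; None plays the role of lpp(0)=0, below all power products *)
definition lpp :: "('v pp \<Rightarrow> 'v pp \<Rightarrow> bool) \<Rightarrow> ('v, 'k::zero) mpoly \<Rightarrow> 'v pp option" where
  "lpp le p = (if p = 0 then None
     else Some (THE t. t \<in> Poly_Mapping.keys p \<and> (\<forall>s\<in>Poly_Mapping.keys p. le s t)))"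

definition lc :: "('v pp \<Rightarrow> 'v pp \<Rightarrow> bool) \<Rightarrow> ('v, 'k::zero) mpoly \<Rightarrow> 'k" where
  "lc le p = (case lpp le p of None \<Rightarrow> 0 | Some t \<Rightarrow> Poly_Mapping.lookup p t)"

definition vkeys :: "nat \<Rightarrow> ('v, 'k::zero) mvec \<Rightarrow> ('v pp \<times> nat) set" where
  "vkeys m u = {(\<alpha>, i). i < m \<and> \<alpha> \<in> Poly_Mapping.keys (u i)}"

definition vlpp :: "nat \<Rightarrow> ('v pp \<times> nat \<Rightarrow> 'v pp \<times> nat \<Rightarrow> bool) \<Rightarrow> ('v, 'k::zero) mvec
     \<Rightarrow> ('v pp \<times> nat) option" where
  "vlpp m le u = (if vkeys m u = {} then None
     else Some (THE t. t \<in> vkeys m u \<and> (\<forall>s\<in>vkeys m u. le s t)))"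

definition ole :: "('a \<Rightarrow> 'a \<Rightarrow> bool) \<Rightarrow> 'a option \<Rightarrow> 'a option \<Rightarrow> bool" where
  "ole le a b = (case a of None \<Rightarrow> True
                  | Some x \<Rightarrow> (case b of None \<Rightarrow> False | Some y \<Rightarrow> le x y))"

definition ppoly :: "'v pp \<Rightarrow> ('v, 'k::{zero,one}) mpoly" where
  "ppoly t = Poly_Mapping.single t 1"

definition vmult :: "('v, 'k::comm_ring_1) mpoly \<Rightarrow> ('v, 'k) mvec \<Rightarrow> ('v, 'k) mvec" where
  "vmult p u = (\<lambda>i. p * u i)"

(* lcm of power products (pointwise max of exponents); a - b is truncated pointwise *)
definition pp_lcm :: "'v pp \<Rightarrow> 'v pp \<Rightarrow> 'v pp" where
  "pp_lcm a b = a + (b - a)"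

definition pp_dvd :: "'v pp \<Rightarrow> 'v pp \<Rightarrow> bool" where
  "pp_dvd a b \<longleftrightarrow> (\<exists>c. b = a + c)"

definition in_Rm :: "nat \<Rightarrow> ('v, 'k::zero) mvec \<Rightarrow> bool" where
  "in_Rm m u \<longleftrightarrow> (\<forall>i\<ge>m. u i = 0)"

(* f^[u] is a polynomial in I = <F 0, ..., F (m-1)>: u \<in> R^m and f = u \<cdot> F *)
definition labeled_in :: "nat \<Rightarrow> ('v, 'k::comm_ring_1) mvec \<Rightarrow> ('v, 'k) lpoly \<Rightarrow> bool" where
  "labeled_in m F fu \<longleftrightarrow> in_Rm m (snd fu) \<and> fst fu = (\<Sum>i<m. snd fu i * F i)"

definition unit_vec :: "nat \<Rightarrow> ('v, 'k::comm_ring_1) mvec" where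
  "unit_vec i = (\<lambda>j. if j = i then 1 else 0)"

definition lmult :: "('v, 'k::comm_ring_1) mpoly \<Rightarrow> ('v, 'k) lpoly \<Rightarrow> ('v, 'k) lpoly" where
  "lmult p fu = (p * fst fu, vmult p (snd fu))"

definition ldiff :: "('v, 'k::comm_ring_1) lpoly \<Rightarrow> ('v, 'k) lpoly \<Rightarrow> ('v, 'k) lpoly" where
  "ldiff fu gv = (fst fu - fst gv, (\<lambda>i. snd fu i - snd gv i))"

definition critical_pair ::
  "nat \<Rightarrow> ('v pp \<Rightarrow> 'v pp \<Rightarrow> bool) \<Rightarrow> ('v pp \<times> nat \<Rightarrow> 'v pp \<times> nat \<Rightarrow> bool)
     \<Rightarrow> 'v pp \<Rightarrow> ('v, 'k::comm_ring_1) lpoly \<Rightarrow> 'v pp \<Rightarrow> ('v, 'k) lpoly \<Rightarrow> bool" where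
  "critical_pair m le mle tg gv th hw \<longleftrightarrow>
     fst gv \<noteq> 0 \<and> fst hw \<noteq> 0 \<and>
     (let t = pp_lcm (the (lpp le (fst gv))) (the (lpp le (fst hw))) in
        tg = t - the (lpp le (fst gv)) \<and> th = t - the (lpp le (fst hw))) \<and>
     ole mle (vlpp m mle (vmult (ppoly th) (snd hw))) (vlpp m mle (vmult (ppoly tg) (snd gv)))"

definition spoly ::
  "('v pp \<Rightarrow> 'v pp \<Rightarrow> bool) \<Rightarrow> 'v pp \<Rightarrow> ('v, 'k::field) lpoly \<Rightarrow> 'v pp \<Rightarrow> ('v, 'k) lpoly
     \<Rightarrow> ('v, 'k) lpoly" where
  "spoly le tg gv th hw =
     ldiff (lmult (ppoly tg) gv)
           (lmult (Poly_Mapping.single 0 (lc le (fst gv) / lc le (fst hw)) * ppoly th) hw)"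

definition std_rep ::
  "nat \<Rightarrow> ('v pp \<Rightarrow> 'v pp \<Rightarrow> bool) \<Rightarrow> ('v pp \<times> nat \<Rightarrow> 'v pp \<times> nat \<Rightarrow> bool)
     \<Rightarrow> ('v, 'k::comm_ring_1) lpoly set \<Rightarrow> ('v, 'k) lpoly \<Rightarrow> bool" where
  "std_rep m le mle B fu \<longleftrightarrow>
     (\<exists>ps :: (('v, 'k) mpoly \<times> ('v, 'k) lpoly) list.
        (\<forall>(p, gv) \<in> set ps. gv \<in> B \<and>
            ole le (lpp le (p * fst gv)) (lpp le (fst fu)) \<and>
            ole mle (vlpp m mle (vmult p (snd gv))) (vlpp m mle (snd fu))) \<and>
        fst fu = (\<Sum>(p, gv) \<leftarrow> ps. p * fst gv))"

definition labeled_GB ::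
  "nat \<Rightarrow> ('v pp \<Rightarrow> 'v pp \<Rightarrow> bool) \<Rightarrow> ('v pp \<times> nat \<Rightarrow> 'v pp \<times> nat \<Rightarrow> bool)
     \<Rightarrow> ('v, 'k::comm_ring_1) mvec \<Rightarrow> ('v, 'k) lpoly set \<Rightarrow> bool" where
  "labeled_GB m le mle F G \<longleftrightarrow>
     (\<forall>fu. labeled_in m F fu \<longrightarrow> fst fu \<noteq> 0 \<longrightarrow>
        (\<exists>gv\<in>G. fst gv \<noteq> 0 \<and> pp_dvd (the (lpp le (fst gv))) (the (lpp le (fst fu))) \<and>
           ole mle (vlpp m mle (vmult (ppoly (the (lpp le (fst fu)) - the (lpp le (fst gv)))) (snd gv)))
                   (vlpp m mle (snd fu))))"

end

theory Submission
  imports Defs "HOL-Library.Multiset"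
begin

text \<open>
  Write \<open>f\<^sup>[\<^bold>u\<^sup>]\<close> as a sum of terms \<open>c x\<^sup>s g\<close> with \<open>g\<^sup>[\<^bold>v\<^sup>] \<in> G\<close> whose signatures
  \<open>lpp(x\<^sup>s \<^bold>v)\<close> are all bounded by \<open>lpp(\<^bold>u)\<close>; the generators \<open>f\<^sub>i\<^sup>[\<^bold>e\<^sub>i\<^sup>]\<close> provide one
  such representation. Let \<open>T\<close> be the largest leading power product of its terms. If
  \<open>T \<succ> lpp(f)\<close>, the leading coefficients at \<open>T\<close> cancel, so at least two terms reach \<open>T\<close>.
  Ordering them so that they form a critical pair, their S-polynomial has a standard
  representation; substituting it removes a term at \<open>T\<close> while keeping every signature below
  \<open>lpp(\<^bold>u)\<close>. Descending on \<open>T\<close> and on the number of terms at \<open>T\<close>, which is well-founded,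
  we reach \<open>T = lpp(f)\<close>; a term at \<open>lpp(f)\<close> then exhibits the element of \<open>G\<close> demanded of a
  labeled Groebner basis.
\<close>

lemma finite_total_max:
  assumes "finite S" "S \<noteq> {}"
    and "\<forall>a\<in>S. \<forall>b\<in>S. r a b \<or> r b a"
    and "\<forall>a\<in>S. \<forall>b\<in>S. \<forall>c\<in>S. r a b \<longrightarrow> r b c \<longrightarrow> r a c"
  shows "\<exists>x\<in>S. \<forall>y\<in>S. r y x"
  using assms
proof (induction S rule: finite_ne_induct)
  case (singleton x)
  then show ?case by blast
next
  case (insert x S)
  have "\<forall>a\<in>S. \<forall>b\<in>S. r a b \<or> r b a" "\<forall>a\<in>S. \<forall>b\<in>S. \<forall>c\<in>S. r a b \<longrightarrow> r b c \<longrightarrow> r a c"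
    using insert.prems by blast+
  then obtain y where y: "y \<in> S" "\<forall>z\<in>S. r z y" using insert.IH by blast
  show ?case
  proof (cases "r x y")
    case True
    then show ?thesis using y by blast
  next
    case False
    then have yx: "r y x" using insert.prems(1) y(1) by blast
    have "\<forall>z\<in>S. r z x"
    proof
      fix z assume "z \<in> S"
      then show "r z x" using insert.prems(2) y yx by (meson insertCI)
    qed
    then show ?thesis using insert.prems(1) by blast
  qed
qed

lemma lookup_single_mult:
  "Poly_Mapping.lookup (Poly_Mapping.single a c * p) (a + b) = c * Poly_Mapping.lookup p b"
  for a b :: "'v pp" and c :: "'k::comm_semiring_1"
proof -
  have "Poly_Mapping.lookup (Poly_Mapping.single a c * p) (a + b)
     = (\<Sum>l. (c * (\<Sum>q. Poly_Mapping.lookup p q when q = b)) when a = l)"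
    unfolding lookup_mult lookup_single by (rule Sum_any.cong) (auto simp: when_def)
  then show ?thesis by simp
qed

lemma poly_mapping_sum_single:
  "p = (\<Sum>a\<in>Poly_Mapping.keys p. Poly_Mapping.single a (Poly_Mapping.lookup p a))"
proof (rule poly_mapping_eqI)
  fix k
  show "Poly_Mapping.lookup p k =
      Poly_Mapping.lookup (\<Sum>a\<in>Poly_Mapping.keys p. Poly_Mapping.single a (Poly_Mapping.lookup p a)) k"
    unfolding lookup_sum lookup_single
    by (cases "k \<in> Poly_Mapping.keys p") (simp_all add: when_def in_keys_iff)
qed

lemma keys_single_mult_subset:
  "Poly_Mapping.keys (Poly_Mapping.single a c * p) \<subseteq> (+) a ` Poly_Mapping.keys p"
  for p :: "('v, 'k::comm_semiring_1) mpoly"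
  using keys_mult[of "Poly_Mapping.single a c" p] by (auto split: if_splits)

lemma keys_single_mult:
  "c \<noteq> 0 \<Longrightarrow> Poly_Mapping.keys (Poly_Mapping.single a c * p) = (+) a ` Poly_Mapping.keys p"
  for c :: "'k::field" and p :: "('v, 'k) mpoly"
  using keys_single_mult_subset[of a c p] by (auto simp: in_keys_iff lookup_single_mult)

lemma max_key_mult:
  fixes R :: "'v pp \<Rightarrow> 'v pp \<Rightarrow> bool" and q p :: "('v, 'k::field) mpoly"
  assumes trans: "\<And>a b c. R a b \<Longrightarrow> R b c \<Longrightarrow> R a c"
    and antisym: "\<And>a b. R a b \<Longrightarrow> R b a \<Longrightarrow> a = b"
    and total: "\<And>a b. R a b \<or> R b a"
    and add_mono: "\<And>a b c. R a b \<Longrightarrow> R (c + a) (c + b)"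
    and "q \<noteq> 0" and \<beta>: "\<beta> \<in> Poly_Mapping.keys p" "\<forall>b\<in>Poly_Mapping.keys p. R b \<beta>"
  shows "\<exists>s\<in>Poly_Mapping.keys q. s + \<beta> \<in> Poly_Mapping.keys (q * p) \<and>
           (\<forall>s'\<in>Poly_Mapping.keys q. R (s' + \<beta>) (s + \<beta>))"
proof -
  have "Poly_Mapping.keys q \<noteq> {}" using \<open>q \<noteq> 0\<close> by simp
  then obtain s where s: "s \<in> Poly_Mapping.keys q" "\<forall>s'\<in>Poly_Mapping.keys q. R (s' + \<beta>) (s + \<beta>)"
    using finite_total_max[OF finite_keys, of q "\<lambda>x y. R (x + \<beta>) (y + \<beta>)"] total trans by blast
  \<comment> \<open>only the monomial of \<open>q\<close> at \<open>s\<close> contributes to the coefficient at \<open>s + \<beta>\<close>\<close>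
  have other: "Poly_Mapping.lookup (Poly_Mapping.single a (Poly_Mapping.lookup q a) * p) (s + \<beta>) = 0"
    if a: "a \<in> Poly_Mapping.keys q" "a \<noteq> s" for a
  proof (rule ccontr)
    assume "Poly_Mapping.lookup (Poly_Mapping.single a (Poly_Mapping.lookup q a) * p) (s + \<beta>) \<noteq> 0"
    then have "s + \<beta> \<in> (+) a ` Poly_Mapping.keys p"
      using keys_single_mult_subset[of a "Poly_Mapping.lookup q a" p] by (auto simp: in_keys_iff)
    then obtain b where b: "b \<in> Poly_Mapping.keys p" "s + \<beta> = a + b" by auto
    have "R (a + b) (a + \<beta>)" using add_mono \<beta>(2) b(1) by blast
    moreover have "R (a + \<beta>) (s + \<beta>)" using s(2) a(1) by blast
    ultimately have "a + \<beta> = s + \<beta>" using antisym b(2) by metis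
    then show False using a by simp
  qed
  have "Poly_Mapping.lookup (q * p) (s + \<beta>) =
      (\<Sum>a\<in>Poly_Mapping.keys q. Poly_Mapping.lookup (Poly_Mapping.single a (Poly_Mapping.lookup q a) * p) (s + \<beta>))"
    by (subst poly_mapping_sum_single[of q]) (simp add: sum_distrib_right lookup_sum)
  also have "\<dots> = Poly_Mapping.lookup (Poly_Mapping.single s (Poly_Mapping.lookup q s) * p) (s + \<beta>)"
    using other s(1) by (subst sum.remove[OF finite_keys s(1)]) (simp add: sum.neutral)
  also have "\<dots> = Poly_Mapping.lookup q s * Poly_Mapping.lookup p \<beta>"
    by (rule lookup_single_mult)
  also have "\<dots> \<noteq> 0" using s(1) \<beta>(1) by (simp add: in_keys_iff)
  finally show ?thesis using s by (auto simp: in_keys_iff)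
qed

lemma lookup_sum_mset:
  "Poly_Mapping.lookup (\<Sum>x\<in>#M. f x) k = (\<Sum>x\<in>#M. Poly_Mapping.lookup (f x) k)"
  by (induction M) (simp_all add: lookup_add)

lemma sum_mset_filter_split:
  "(\<Sum>x\<in>#M. f x) = (\<Sum>x\<in>#filter_mset P M. f x) + (\<Sum>x\<in>#filter_mset (\<lambda>x. \<not> P x) M. f x)"
  by (induction M) (simp_all add: add_ac)

lemma two_elements_of_zero_sum:
  fixes f :: "'a \<Rightarrow> 'b::comm_monoid_add"
  assumes "(\<Sum>x\<in>#filter_mset P M. f x) = 0" "filter_mset P M \<noteq> {#}"
    and "\<And>x. x \<in># M \<Longrightarrow> P x \<Longrightarrow> f x \<noteq> 0"
  obtains a b R where "M = add_mset a (add_mset b R)" "P a" "P b"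
proof -
  obtain a where "a \<in># filter_mset P M" using assms(2) by (rule multiset_nonemptyE)
  then have a: "a \<in># M" "P a" by simp_all
  define M' where "M' = M - {#a#}"
  have M: "M = add_mset a M'" using a(1) unfolding M'_def by simp
  have "filter_mset P M' \<noteq> {#}"
  proof
    assume "filter_mset P M' = {#}"
    then have "filter_mset P M = {#a#}" using a(2) M by simp
    then show False using assms(1,3) a by simp
  qed
  then obtain b where "b \<in># filter_mset P M'" by (rule multiset_nonemptyE)
  then have b: "b \<in># M'" "P b" by simp_all
  have "M = add_mset a (add_mset b (M' - {#b#}))" using M b(1) by simp
  then show ?thesis using a(2) b(2) by (rule that)
qed

lemma pp_lcm_commute: "pp_lcm a b = pp_lcm b (a :: 'v pp)"
proof (rule poly_mapping_eqI)
  fix k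
  show "Poly_Mapping.lookup (pp_lcm a b) k = Poly_Mapping.lookup (pp_lcm b a) k"
    unfolding pp_lcm_def lookup_add lookup_minus by arith
qed

lemma pp_lcm_minus_add: "pp_lcm a b - a + a = pp_lcm a (b :: 'v pp)"
proof (rule poly_mapping_eqI)
  fix k
  show "Poly_Mapping.lookup (pp_lcm a b - a + a) k = Poly_Mapping.lookup (pp_lcm a b) k"
    unfolding pp_lcm_def lookup_add lookup_minus by arith
qed

lemma pp_common_multiple_cofactor:
  fixes s a s' a' :: "'v pp"
  assumes "s + a = s' + a'"
  shows "(s + a - pp_lcm a a') + (pp_lcm a a' - a) = s"
proof (rule poly_mapping_eqI)
  fix k
  have "Poly_Mapping.lookup s k + Poly_Mapping.lookup a k = Poly_Mapping.lookup s' k + Poly_Mapping.lookup a' k"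
    using arg_cong[OF assms, of "\<lambda>p. Poly_Mapping.lookup p k"] by (simp add: lookup_add)
  then show "Poly_Mapping.lookup (s + a - pp_lcm a a' + (pp_lcm a a' - a)) k = Poly_Mapping.lookup s k"
    unfolding lookup_add lookup_minus pp_lcm_def by arith
qed

lemma finite_vkeys: "finite (vkeys m u)"
proof (rule finite_subset)
  show "vkeys m u \<subseteq> (\<Union>i<m. Poly_Mapping.keys (u i) \<times> {i})" unfolding vkeys_def by auto
qed auto

lemma vkeys_unit_vec: "i < m \<Longrightarrow> vkeys m (unit_vec i :: ('v, 'k::comm_ring_1) mvec) = {(0, i)}"
  unfolding vkeys_def unit_vec_def by auto

lemma vkeys_label_nonempty:
  assumes "labeled_in m F g" "fst g \<noteq> 0"
  shows "vkeys m (snd g) \<noteq> {}"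
proof
  assume "vkeys m (snd g) = {}"
  then have "\<forall>i<m. Poly_Mapping.keys (snd g i) = {}" unfolding vkeys_def by blast
  then have "\<forall>i<m. snd g i = 0" by simp
  then show False using assms unfolding labeled_in_def by simp
qed

text \<open>A triple \<open>(c, s, g)\<close> stands for the term \<open>c x\<^sup>s g\<close> of a representation.\<close>

type_synonym ('v, 'k) summand = "'k \<times> 'v pp \<times> ('v, 'k) lpoly"

fun summand_poly :: "('v, 'k::comm_semiring_1) summand \<Rightarrow> ('v, 'k) mpoly" where
  "summand_poly (c, s, g) = Poly_Mapping.single s c * fst g"

definition monomial_expansion ::
  "'v pp \<Rightarrow> 'k::comm_semiring_1 \<Rightarrow> (('v, 'k) mpoly \<times> ('v, 'k) lpoly) list \<Rightarrow> ('v, 'k) summand multiset"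
where
  "monomial_expansion \<mu> c ps = (\<Sum>(q, h)\<leftarrow>ps. if fst h = 0 then {#}
     else image_mset (\<lambda>r. (c * Poly_Mapping.lookup q r, \<mu> + r, h)) (mset_set (Poly_Mapping.keys q)))"

lemma sum_monomial_expansion:
  "(\<Sum>e\<in>#monomial_expansion \<mu> c ps. summand_poly e) =
     Poly_Mapping.single \<mu> c * (\<Sum>(q, h)\<leftarrow>ps. q * fst h)"
proof (induction ps)
  case Nil
  then show ?case by (simp add: monomial_expansion_def)
next
  case (Cons qh ps)
  obtain q h where qh: "qh = (q, h)" by (cases qh)
  have "(\<Sum>r\<in>Poly_Mapping.keys q. summand_poly (c * Poly_Mapping.lookup q r, \<mu> + r, h)) =
      (\<Sum>r\<in>Poly_Mapping.keys q. Poly_Mapping.single \<mu> c * (Poly_Mapping.single r (Poly_Mapping.lookup q r) * fst h))"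
    by (simp add: mult_single mult.assoc[symmetric])
  also have "\<dots> = Poly_Mapping.single \<mu> c * (q * fst h)"
    by (subst (3) poly_mapping_sum_single[of q]) (simp add: sum_distrib_left sum_distrib_right)
  finally have "(\<Sum>e\<in>#monomial_expansion \<mu> c [(q, h)]. summand_poly e) = Poly_Mapping.single \<mu> c * (q * fst h)"
    by (simp add: monomial_expansion_def sum_unfold_sum_mset multiset.map_comp o_def)
  moreover have "monomial_expansion \<mu> c (qh # ps) = monomial_expansion \<mu> c [(q, h)] + monomial_expansion \<mu> c ps"
    by (simp add: monomial_expansion_def qh)
  ultimately show ?case using Cons.IH by (simp add: qh distrib_left)
qed

lemma in_monomial_expansion:
  "e \<in># monomial_expansion \<mu> c ps \<Longrightarrow> \<exists>q h r. (q, h) \<in> set ps \<and> fst h \<noteq> 0 \<and>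
     r \<in> Poly_Mapping.keys q \<and> e = (c * Poly_Mapping.lookup q r, \<mu> + r, h)"
proof (induction ps)
  case (Cons qh ps)
  obtain q h where qh: "qh = (q, h)" by (cases qh)
  have "e \<in># monomial_expansion \<mu> c [(q, h)] \<or> e \<in># monomial_expansion \<mu> c ps"
    using Cons.prems by (simp add: monomial_expansion_def qh)
  then show ?case
  proof
    assume "e \<in># monomial_expansion \<mu> c [(q, h)]"
    then have "fst h \<noteq> 0" "\<exists>r\<in>Poly_Mapping.keys q. e = (c * Poly_Mapping.lookup q r, \<mu> + r, h)"
      by (auto simp: monomial_expansion_def split: if_splits)
    moreover have "(q, h) \<in> set (qh # ps)" using qh by simp
    ultimately show ?case by blast
  qed (use Cons.IH in auto)
qed (simp add: monomial_expansion_def)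

locale term_orders =
  fixes m :: nat
    and le :: "'v pp \<Rightarrow> 'v pp \<Rightarrow> bool"
    and mle :: "'v pp \<times> nat \<Rightarrow> 'v pp \<times> nat \<Rightarrow> bool"
  assumes pp_term_order: "pp_term_order le"
    and mod_term_order: "mod_term_order m mle"
begin

lemma ple_trans: "le a b \<Longrightarrow> le b c \<Longrightarrow> le a c"
proof -
  have "\<forall>a b c. le a b \<longrightarrow> le b c \<longrightarrow> le a c"
    using pp_term_order unfolding pp_term_order_def by (elim conjE) assumption
  then show "le a b \<Longrightarrow> le b c \<Longrightarrow> le a c" by blast
qed

lemma ple_antisym: "le a b \<Longrightarrow> le b a \<Longrightarrow> a = b"
proof -
  have "\<forall>a b. le a b \<longrightarrow> le b a \<longrightarrow> a = b"
    using pp_term_order unfolding pp_term_order_def by (elim conjE) assumption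
  then show "le a b \<Longrightarrow> le b a \<Longrightarrow> a = b" by blast
qed

lemma ple_total: "le a b \<or> le b a"
proof -
  have "\<forall>a b. le a b \<or> le b a"
    using pp_term_order unfolding pp_term_order_def by (elim conjE) assumption
  then show "le a b \<or> le b a" by blast
qed

lemma ple_refl: "le a a"
  using ple_total by blast

lemma ple_add: "le a b \<Longrightarrow> le (c + a) (c + b)"
proof -
  have "\<forall>a b c. le a b \<longrightarrow> le (c + a) (c + b)"
    using pp_term_order unfolding pp_term_order_def by (elim conjE) assumption
  then show "le a b \<Longrightarrow> le (c + a) (c + b)" by blast
qed

lemma wf_ple_strict: "wf {(a, b). le a b \<and> a \<noteq> b}"
proof (rule wfI_min)
  have min: "\<forall>S. S \<noteq> {} \<longrightarrow> (\<exists>x\<in>S. \<forall>y\<in>S. le x y)"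
    using pp_term_order unfolding pp_term_order_def by (elim conjE) assumption
  fix x :: "'v pp" and Q assume "x \<in> Q"
  then obtain z where "z \<in> Q" "\<forall>y\<in>Q. le z y" using min by blast
  then show "\<exists>z\<in>Q. \<forall>y. (y, z) \<in> {(a, b). le a b \<and> a \<noteq> b} \<longrightarrow> y \<notin> Q"
    using ple_antisym by blast
qed

lemma mle_refl: "snd a < m \<Longrightarrow> mle a a"
proof -
  have "\<forall>a\<in>{s. snd s < m}. mle a a"
    using mod_term_order unfolding mod_term_order_def Let_def by (elim conjE) assumption
  then show "snd a < m \<Longrightarrow> mle a a" by blast
qed

lemma mle_trans: "snd a < m \<Longrightarrow> snd b < m \<Longrightarrow> snd c < m \<Longrightarrow> mle a b \<Longrightarrow> mle b c \<Longrightarrow> mle a c"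
proof -
  have "\<forall>a\<in>{s. snd s < m}. \<forall>b\<in>{s. snd s < m}. \<forall>c\<in>{s. snd s < m}. mle a b \<longrightarrow> mle b c \<longrightarrow> mle a c"
    using mod_term_order unfolding mod_term_order_def Let_def by (elim conjE) assumption
  then show "snd a < m \<Longrightarrow> snd b < m \<Longrightarrow> snd c < m \<Longrightarrow> mle a b \<Longrightarrow> mle b c \<Longrightarrow> mle a c" by blast
qed

lemma mle_antisym: "snd a < m \<Longrightarrow> snd b < m \<Longrightarrow> mle a b \<Longrightarrow> mle b a \<Longrightarrow> a = b"
proof -
  have "\<forall>a\<in>{s. snd s < m}. \<forall>b\<in>{s. snd s < m}. mle a b \<longrightarrow> mle b a \<longrightarrow> a = b"
    using mod_term_order unfolding mod_term_order_def Let_def by (elim conjE) assumption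
  then show "snd a < m \<Longrightarrow> snd b < m \<Longrightarrow> mle a b \<Longrightarrow> mle b a \<Longrightarrow> a = b" by blast
qed

lemma mle_total: "snd a < m \<Longrightarrow> snd b < m \<Longrightarrow> mle a b \<or> mle b a"
proof -
  have "\<forall>a\<in>{s. snd s < m}. \<forall>b\<in>{s. snd s < m}. mle a b \<or> mle b a"
    using mod_term_order unfolding mod_term_order_def Let_def by (elim conjE) assumption
  then show "snd a < m \<Longrightarrow> snd b < m \<Longrightarrow> mle a b \<or> mle b a" by blast
qed

lemma mle_add: "i < m \<Longrightarrow> j < m \<Longrightarrow> mle (a, i) (b, j) \<Longrightarrow> mle (c + a, i) (c + b, j)"
proof -
  have "\<forall>\<alpha> i \<beta> j \<gamma>. i < m \<longrightarrow> j < m \<longrightarrow> mle (\<alpha>, i) (\<beta>, j) \<longrightarrow> mle (\<gamma> + \<alpha>, i) (\<gamma> + \<beta>, j)"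
    using mod_term_order unfolding mod_term_order_def Let_def by (elim conjE) assumption
  then show "i < m \<Longrightarrow> j < m \<Longrightarrow> mle (a, i) (b, j) \<Longrightarrow> mle (c + a, i) (c + b, j)" by blast
qed

definition lp :: "('v, 'k::zero) mpoly \<Rightarrow> 'v pp" where
  "lp p = the (lpp le p)"

definition vlp :: "('v, 'k::zero) mvec \<Rightarrow> 'v pp \<times> nat" where
  "vlp u = the (vlpp m mle u)"

lemma lpp_eqI:
  assumes "t \<in> Poly_Mapping.keys p" "\<forall>s\<in>Poly_Mapping.keys p. le s t"
  shows "lpp le p = Some t"
proof -
  have "(THE t. t \<in> Poly_Mapping.keys p \<and> (\<forall>s\<in>Poly_Mapping.keys p. le s t)) = t"
    by (rule the_equality) (use assms ple_antisym in blast)+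
  then show ?thesis using assms(1) unfolding lpp_def by auto
qed

lemma
  assumes "p \<noteq> 0"
  shows lpp_lp: "lpp le p = Some (lp p)" and lp_in_keys: "lp p \<in> Poly_Mapping.keys p"
    and lp_max: "\<forall>s\<in>Poly_Mapping.keys p. le s (lp p)"
proof -
  have "Poly_Mapping.keys p \<noteq> {}" using assms by simp
  then obtain t where t: "t \<in> Poly_Mapping.keys p" "\<forall>s\<in>Poly_Mapping.keys p. le s t"
    using finite_total_max[OF finite_keys, of p le] ple_total ple_trans by blast
  then have "lpp le p = Some t" by (rule lpp_eqI)
  then show "lpp le p = Some (lp p)" "lp p \<in> Poly_Mapping.keys p" "\<forall>s\<in>Poly_Mapping.keys p. le s (lp p)"
    using t unfolding lp_def by auto
qed

lemma key_le_lp: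
  assumes "s \<in> Poly_Mapping.keys p"
  shows "le s (lp p)"
proof -
  have "p \<noteq> 0" using assms by auto
  then show ?thesis using lp_max assms by blast
qed

lemma lpp_SomeD: "lpp le p = Some t \<Longrightarrow> p \<noteq> 0 \<and> t = lp p"
  unfolding lpp_def lp_def by (auto split: if_splits)

lemma vlpp_eqI:
  assumes "t \<in> vkeys m u" "\<forall>s\<in>vkeys m u. mle s t"
  shows "vlpp m mle u = Some t"
proof -
  have "\<forall>a\<in>vkeys m u. snd a < m" unfolding vkeys_def by auto
  then have "(THE t. t \<in> vkeys m u \<and> (\<forall>s\<in>vkeys m u. mle s t)) = t"
    by (intro the_equality) (use assms mle_antisym in blast)+
  then show ?thesis using assms(1) unfolding vlpp_def by auto
qed

lemma
  assumes "vkeys m u \<noteq> {}"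
  shows vlpp_vlp: "vlpp m mle u = Some (vlp u)" and vlp_in_vkeys: "vlp u \<in> vkeys m u"
    and vlp_max: "\<forall>s\<in>vkeys m u. mle s (vlp u)"
proof -
  have "\<forall>a\<in>vkeys m u. snd a < m" unfolding vkeys_def by auto
  then obtain t where t: "t \<in> vkeys m u" "\<forall>s\<in>vkeys m u. mle s t"
    using finite_total_max[OF finite_vkeys assms, of mle] mle_total mle_trans by metis
  then have "vlpp m mle u = Some t" by (rule vlpp_eqI)
  then show "vlpp m mle u = Some (vlp u)" "vlp u \<in> vkeys m u" "\<forall>s\<in>vkeys m u. mle s (vlp u)"
    using t unfolding vlp_def by auto
qed

lemma snd_vlp_less: "vkeys m u \<noteq> {} \<Longrightarrow> snd (vlp u) < m"
  using vlp_in_vkeys unfolding vkeys_def by fastforce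

lemma vlpp_SomeD: "vlpp m mle u = Some t \<Longrightarrow> vkeys m u \<noteq> {} \<and> t = vlp u"
  unfolding vlpp_def vlp_def by (auto split: if_splits)

definition sig :: "'v pp \<Rightarrow> ('v, 'k::zero) lpoly \<Rightarrow> 'v pp \<times> nat" where
  "sig t g = (t + fst (vlp (snd g)), snd (vlp (snd g)))"

lemma snd_sig_less: "vkeys m (snd g) \<noteq> {} \<Longrightarrow> snd (sig t g) < m"
  unfolding sig_def by (simp add: snd_vlp_less)

lemma sig_add:
  assumes "vkeys m (snd g) \<noteq> {}" "vkeys m (snd h) \<noteq> {}" "mle (sig s g) (sig t h)"
  shows "mle (sig (\<mu> + s) g) (sig (\<mu> + t) h)"
  using mle_add[OF snd_vlp_less[OF assms(1)] snd_vlp_less[OF assms(2)], of "s + fst (vlp (snd g))"]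
    assms(3) unfolding sig_def by (simp add: add.assoc)

lemma key_single_mult_le:
  "x \<in> Poly_Mapping.keys (Poly_Mapping.single s c * g) \<Longrightarrow> le x (s + lp g)"
  for g :: "('v, 'k::comm_semiring_1) mpoly"
  using keys_single_mult_subset[of s c g] by (auto intro: ple_add key_le_lp)

lemma vkey_single_mult_le:
  fixes g :: "('v, 'k::comm_ring_1) lpoly"
  assumes "vkeys m (snd g) \<noteq> {}" "x \<in> vkeys m (vmult (Poly_Mapping.single s c) (snd g))"
  shows "mle x (sig s g)"
proof -
  obtain b j where x: "x = (b, j)" "j < m" "b \<in> Poly_Mapping.keys (Poly_Mapping.single s c * snd g j)"
    using assms(2) unfolding vkeys_def vmult_def by auto
  then obtain a where "a \<in> Poly_Mapping.keys (snd g j)" "b = s + a"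
    using keys_single_mult_subset[of s c "snd g j"] by auto
  moreover have "mle (a, j) (vlp (snd g))" if "a \<in> Poly_Mapping.keys (snd g j)"
    using vlp_max[OF assms(1)] that x(2) unfolding vkeys_def by auto
  ultimately show ?thesis
    using mle_add[OF x(2) snd_vlp_less[OF assms(1)]] x(1) unfolding sig_def by force
qed

lemma lpp_single_mult:
  fixes g :: "('v, 'k::field) mpoly"
  assumes "c \<noteq> 0" "g \<noteq> 0"
  shows "lpp le (Poly_Mapping.single s c * g) = Some (s + lp g)"
proof (rule lpp_eqI)
  show "s + lp g \<in> Poly_Mapping.keys (Poly_Mapping.single s c * g)"
    unfolding keys_single_mult[OF assms(1)] using lp_in_keys[OF assms(2)] by (rule imageI)
  show "\<forall>x\<in>Poly_Mapping.keys (Poly_Mapping.single s c * g). le x (s + lp g)"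
    using key_single_mult_le by blast
qed

lemma vkeys_single_mult:
  fixes v :: "('v, 'k::field) mvec"
  assumes "c \<noteq> 0"
  shows "vkeys m (vmult (Poly_Mapping.single s c) v) = (\<lambda>(\<alpha>, i). (s + \<alpha>, i)) ` vkeys m v"
  unfolding vkeys_def vmult_def keys_single_mult[OF assms] by auto

lemma vlpp_single_mult:
  fixes g :: "('v, 'k::field) lpoly"
  assumes "c \<noteq> 0" "vkeys m (snd g) \<noteq> {}"
  shows "vlpp m mle (vmult (Poly_Mapping.single s c) (snd g)) = Some (sig s g)"
proof (rule vlpp_eqI)
  have "sig s g = (\<lambda>(\<alpha>, i). (s + \<alpha>, i)) (vlp (snd g))"
    unfolding sig_def by (simp add: case_prod_beta)
  then show "sig s g \<in> vkeys m (vmult (Poly_Mapping.single s c) (snd g))"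
    unfolding vkeys_single_mult[OF assms(1)] using vlp_in_vkeys[OF assms(2)] by blast
  show "\<forall>x\<in>vkeys m (vmult (Poly_Mapping.single s c) (snd g)). mle x (sig s g)"
    using vkey_single_mult_le assms(2) by blast
qed

lemma vlpp_ppoly_mult:
  fixes g :: "('v, 'k::field) lpoly"
  shows "vkeys m (snd g) \<noteq> {} \<Longrightarrow> vlpp m mle (vmult (ppoly t) (snd g)) = Some (sig t g)"
  unfolding ppoly_def by (rule vlpp_single_mult) simp

lemma lpp_mult_bound:
  fixes q h :: "('v, 'k::field) mpoly"
  assumes "q \<noteq> 0" "h \<noteq> 0"
  shows "\<exists>t. lpp le (q * h) = Some t \<and> (\<forall>r\<in>Poly_Mapping.keys q. le (r + lp h) t)"
proof -
  have "\<exists>s\<in>Poly_Mapping.keys q. s + lp h \<in> Poly_Mapping.keys (q * h) \<and>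
      (\<forall>r\<in>Poly_Mapping.keys q. le (r + lp h) (s + lp h))"
  proof (rule max_key_mult[OF _ _ _ _ assms(1)])
    show "\<And>a b c. le a b \<Longrightarrow> le b c \<Longrightarrow> le a c" by (rule ple_trans)
    show "\<And>a b. le a b \<Longrightarrow> le b a \<Longrightarrow> a = b" by (rule ple_antisym)
    show "\<And>a b. le a b \<or> le b a" by (rule ple_total)
    show "\<And>a b c. le a b \<Longrightarrow> le (c + a) (c + b)" by (rule ple_add)
    show "lp h \<in> Poly_Mapping.keys h" "\<forall>b\<in>Poly_Mapping.keys h. le b (lp h)"
      using lp_in_keys lp_max assms(2) by blast+
  qed
  then obtain s where s: "s \<in> Poly_Mapping.keys q" "s + lp h \<in> Poly_Mapping.keys (q * h)"
      "\<forall>r\<in>Poly_Mapping.keys q. le (r + lp h) (s + lp h)"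
    by blast
  have "\<forall>x\<in>Poly_Mapping.keys (q * h). le x (s + lp h)"
  proof
    fix x assume "x \<in> Poly_Mapping.keys (q * h)"
    then obtain a b where ab: "x = a + b" "a \<in> Poly_Mapping.keys q" "b \<in> Poly_Mapping.keys h"
      using keys_mult by blast
    have "le (a + b) (a + lp h)" using ple_add key_le_lp ab(3) by blast
    then show "le x (s + lp h)" using s(3) ab ple_trans by blast
  qed
  then show ?thesis using lpp_eqI[OF s(2)] s(3) by blast
qed

lemma max_key_mult_component:
  fixes q p :: "('v, 'k::field) mpoly"
  assumes "i < m" "q \<noteq> 0" "\<beta> \<in> Poly_Mapping.keys p" "\<forall>b\<in>Poly_Mapping.keys p. mle (b, i) (\<beta>, i)"
  shows "\<exists>s\<in>Poly_Mapping.keys q. s + \<beta> \<in> Poly_Mapping.keys (q * p) \<and>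
           (\<forall>r\<in>Poly_Mapping.keys q. mle (r + \<beta>, i) (s + \<beta>, i))"
proof (rule max_key_mult[where R = "\<lambda>x y. mle (x, i) (y, i)", OF _ _ _ _ assms(2-4)])
  show "\<And>a b c. mle (a, i) (b, i) \<Longrightarrow> mle (b, i) (c, i) \<Longrightarrow> mle (a, i) (c, i)"
    using mle_trans assms(1) by (metis snd_conv)
  show "\<And>a b. mle (a, i) (b, i) \<Longrightarrow> mle (b, i) (a, i) \<Longrightarrow> a = b"
    using mle_antisym assms(1) by (metis prod.inject snd_conv)
  show "\<And>a b. mle (a, i) (b, i) \<or> mle (b, i) (a, i)"
    using mle_total assms(1) by (metis snd_conv)
  show "\<And>a b c. mle (a, i) (b, i) \<Longrightarrow> mle (c + a, i) (c + b, i)"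
    using mle_add assms(1) by blast
qed

lemma vlpp_mult_bound:
  fixes q :: "('v, 'k::field) mpoly" and h :: "('v, 'k) lpoly"
  assumes "q \<noteq> 0" "vkeys m (snd h) \<noteq> {}"
  shows "\<exists>t. vlpp m mle (vmult q (snd h)) = Some t \<and> (\<forall>r\<in>Poly_Mapping.keys q. mle (sig r h) t)"
proof -
  obtain \<beta> i where \<beta>: "vlp (snd h) = (\<beta>, i)" by fastforce
  have i: "i < m" and \<beta>_key: "\<beta> \<in> Poly_Mapping.keys (snd h i)"
    using vlp_in_vkeys[OF assms(2)] \<beta> unfolding vkeys_def by auto
  have \<beta>_max: "\<forall>x\<in>vkeys m (snd h). mle x (\<beta>, i)" using vlp_max[OF assms(2)] \<beta> by simp
  then have "\<forall>b\<in>Poly_Mapping.keys (snd h i). mle (b, i) (\<beta>, i)" using i unfolding vkeys_def by auto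
  then obtain s where s: "s \<in> Poly_Mapping.keys q" "s + \<beta> \<in> Poly_Mapping.keys (q * snd h i)"
      "\<forall>r\<in>Poly_Mapping.keys q. mle (r + \<beta>, i) (s + \<beta>, i)"
    using max_key_mult_component[OF i assms(1) \<beta>_key] by blast
  have "\<forall>x\<in>vkeys m (vmult q (snd h)). mle x (s + \<beta>, i)"
  proof
    fix x assume "x \<in> vkeys m (vmult q (snd h))"
    then obtain y j where x: "x = (y, j)" "j < m" "y \<in> Poly_Mapping.keys (q * snd h j)"
      unfolding vkeys_def vmult_def by auto
    then obtain a b where ab: "y = a + b" "a \<in> Poly_Mapping.keys q" "b \<in> Poly_Mapping.keys (snd h j)"
      using keys_mult by blast
    have "(b, j) \<in> vkeys m (snd h)" using ab x unfolding vkeys_def by auto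
    then have "mle (a + b, j) (a + \<beta>, i)" using mle_add x(2) i \<beta>_max by blast
    moreover have "mle (a + \<beta>, i) (s + \<beta>, i)" using s(3) ab(2) by blast
    ultimately show "mle x (s + \<beta>, i)" using mle_trans[of x "(a + \<beta>, i)" "(s + \<beta>, i)"] x ab i by simp
  qed
  moreover have "(s + \<beta>, i) \<in> vkeys m (vmult q (snd h))"
    using s(2) i unfolding vkeys_def vmult_def by auto
  ultimately show ?thesis using vlpp_eqI s(3) \<beta> unfolding sig_def by fastforce
qed

fun summand_lp :: "('v, 'k::zero) summand \<Rightarrow> 'v pp" where
  "summand_lp (c, s, g) = s + lp (fst g)"

definition cofactor :: "('v, 'k::zero) lpoly \<Rightarrow> ('v, 'k) lpoly \<Rightarrow> 'v pp" where
  "cofactor g h = pp_lcm (lp (fst g)) (lp (fst h)) - lp (fst g)"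

lemma cofactor_add_lp: "cofactor g h + lp (fst g) = pp_lcm (lp (fst g)) (lp (fst h))"
  unfolding cofactor_def by (rule pp_lcm_minus_add)

lemma spoly_eq:
  "spoly le tg g th h =
    (Poly_Mapping.single tg 1 * fst g - Poly_Mapping.single th (lc le (fst g) / lc le (fst h)) * fst h,
     \<lambda>i. Poly_Mapping.single tg 1 * snd g i - Poly_Mapping.single th (lc le (fst g) / lc le (fst h)) * snd h i)"
  unfolding spoly_def ldiff_def lmult_def vmult_def ppoly_def by (simp add: mult_single)

lemma spoly_keys_below:
  fixes g h :: "('v, 'k::field) lpoly"
  assumes "fst g \<noteq> 0" "fst h \<noteq> 0" "tg + lp (fst g) = L" "th + lp (fst h) = L"
    and "x \<in> Poly_Mapping.keys (fst (spoly le tg g th h))"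
  shows "le x L \<and> x \<noteq> L"
proof -
  define k where "k = lc le (fst g) / lc le (fst h)"
  have keys: "x \<in> Poly_Mapping.keys (Poly_Mapping.single tg 1 * fst g) \<union>
      Poly_Mapping.keys (Poly_Mapping.single th k * fst h)"
    using assms(5) keys_diff unfolding spoly_eq k_def by fastforce
  then have "le x L"
  proof
    assume "x \<in> Poly_Mapping.keys (Poly_Mapping.single tg 1 * fst g)"
    then show ?thesis using key_single_mult_le[of x tg 1 "fst g"] assms(3) by simp
  next
    assume "x \<in> Poly_Mapping.keys (Poly_Mapping.single th k * fst h)"
    then show ?thesis using key_single_mult_le[of x th k "fst h"] assms(4) by simp
  qed
  \<comment> \<open>the leading coefficients cancel at \<open>L\<close>\<close>
  have lc: "lc le p = Poly_Mapping.lookup p (lp p)" "lc le p \<noteq> 0" if "p \<noteq> 0" for p :: "('v, 'k) mpoly"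
    using lpp_lp[OF that] lp_in_keys[OF that] unfolding lc_def by (simp_all add: in_keys_iff)
  have "Poly_Mapping.lookup (fst (spoly le tg g th h)) L =
      Poly_Mapping.lookup (Poly_Mapping.single tg 1 * fst g) (tg + lp (fst g))
      - Poly_Mapping.lookup (Poly_Mapping.single th k * fst h) (th + lp (fst h))"
    unfolding spoly_eq k_def assms(3,4) by (simp add: lookup_minus)
  also have "\<dots> = 0"
    unfolding lookup_single_mult k_def using lc assms(1,2) by simp
  finally have "x \<noteq> L" using assms(5) by (auto simp: in_keys_iff)
  with \<open>le x L\<close> show ?thesis by blast
qed

lemma spoly_vlp_le:
  fixes g h :: "('v, 'k::field) lpoly"
  assumes "vkeys m (snd g) \<noteq> {}" "vkeys m (snd h) \<noteq> {}" "mle (sig th h) (sig tg g)"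
    and "vkeys m (snd (spoly le tg g th h)) \<noteq> {}"
  shows "mle (vlp (snd (spoly le tg g th h))) (sig tg g)"
proof -
  define k where "k = lc le (fst g) / lc le (fst h)"
  obtain a i where ai: "vlp (snd (spoly le tg g th h)) = (a, i)" "i < m"
      "a \<in> Poly_Mapping.keys (Poly_Mapping.single tg 1 * snd g i - Poly_Mapping.single th k * snd h i)"
    using vlp_in_vkeys[OF assms(4)] unfolding vkeys_def spoly_eq k_def by auto
  then have "(a, i) \<in> vkeys m (vmult (Poly_Mapping.single tg 1) (snd g)) \<or>
      (a, i) \<in> vkeys m (vmult (Poly_Mapping.single th k) (snd h))"
    using keys_diff unfolding vkeys_def vmult_def by fastforce
  then show ?thesis
  proof
    assume "(a, i) \<in> vkeys m (vmult (Poly_Mapping.single th k) (snd h))"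
    then have "mle (a, i) (sig th h)" using vkey_single_mult_le assms(2) by blast
    moreover have "snd (sig th h) < m" "snd (sig tg g) < m" using snd_sig_less assms(1,2) by blast+
    ultimately show ?thesis using mle_trans[OF _ _ _ _ assms(3)] ai(1,2) by simp
  qed (use vkey_single_mult_le assms(1) ai(1) in simp)
qed

lemma critical_pair_cofactors:
  fixes g h :: "('v, 'k::field) lpoly"
  assumes "fst g \<noteq> 0" "fst h \<noteq> 0" "vkeys m (snd g) \<noteq> {}" "vkeys m (snd h) \<noteq> {}"
    and "mle (sig (cofactor h g) h) (sig (cofactor g h) g)"
  shows "critical_pair m le mle (cofactor g h) g (cofactor h g) h"
proof -
  have "cofactor h g = pp_lcm (lp (fst g)) (lp (fst h)) - lp (fst h)"
    unfolding cofactor_def by (simp add: pp_lcm_commute[of "lp (fst h)"])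
  then show ?thesis
    using assms vlpp_ppoly_mult[OF assms(3)] vlpp_ppoly_mult[OF assms(4)]
    unfolding critical_pair_def Let_def lp_def[symmetric] by (simp add: ole_def cofactor_def)
qed

lemma std_rep_term_lp_below:
  fixes q f :: "('v, 'k::field) mpoly" and h :: "('v, 'k) lpoly"
  assumes "fst h \<noteq> 0" "r \<in> Poly_Mapping.keys q"
    and "ole le (lpp le (q * fst h)) (lpp le f)" "\<forall>x\<in>Poly_Mapping.keys f. le x L \<and> x \<noteq> L"
  shows "le (r + lp (fst h)) L \<and> r + lp (fst h) \<noteq> L"
proof -
  have "q \<noteq> 0" using assms(2) by auto
  then obtain t where t: "lpp le (q * fst h) = Some t" "le (r + lp (fst h)) t"
    using lpp_mult_bound assms(1,2) by blast
  then obtain x where x: "lpp le f = Some x" "le t x"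
    using assms(3) unfolding ole_def by (auto split: option.splits)
  then have "x \<in> Poly_Mapping.keys f" using lpp_SomeD lp_in_keys by blast
  then have "le x L" "x \<noteq> L" using assms(4) by auto
  moreover have "le (r + lp (fst h)) x" using ple_trans t(2) x(2) by blast
  ultimately show ?thesis using ple_trans ple_antisym by blast
qed

lemma std_rep_term_sig_below:
  fixes q :: "('v, 'k::field) mpoly" and h :: "('v, 'k) lpoly"
  assumes "vkeys m (snd h) \<noteq> {}" "r \<in> Poly_Mapping.keys q"
    and "ole mle (vlpp m mle (vmult q (snd h))) (vlpp m mle u)"
    and "vkeys m u \<noteq> {} \<Longrightarrow> mle (vlp u) W" "snd W < m"
  shows "mle (sig r h) W"
proof -
  have "q \<noteq> 0" using assms(2) by auto
  then obtain t where t: "vlpp m mle (vmult q (snd h)) = Some t" "mle (sig r h) t"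
    using vlpp_mult_bound assms(1,2) by blast
  then obtain y where y: "vlpp m mle u = Some y" "mle t y"
    using assms(3) unfolding ole_def by (auto split: option.splits)
  then have "vkeys m u \<noteq> {}" "y = vlp u" using vlpp_SomeD by blast+
  then have "mle y W" "snd y < m" using assms(4) snd_vlp_less by blast+
  moreover have "snd t < m" using vlpp_SomeD[OF t(1)] snd_vlp_less by blast
  moreover have "snd (sig r h) < m" using snd_sig_less[OF assms(1)] .
  ultimately have "mle (sig r h) y" using mle_trans t(2) y(2) by blast
  then show ?thesis using mle_trans \<open>mle y W\<close> \<open>snd y < m\<close> \<open>snd (sig r h) < m\<close> assms(5) by blast
qed

lemma summand_spoly_decomp:
  fixes g h :: "('v, 'k::field) lpoly"
  assumes "\<mu> + tg = s" "\<mu> + th = s'"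
  shows "Poly_Mapping.single s c * fst g =
    Poly_Mapping.single \<mu> c * fst (spoly le tg g th h) +
    Poly_Mapping.single s' (c * (lc le (fst g) / lc le (fst h))) * fst h"
proof -
  have "Poly_Mapping.single s c = Poly_Mapping.single \<mu> c * Poly_Mapping.single tg 1"
    "Poly_Mapping.single s' (c * (lc le (fst g) / lc le (fst h))) =
       Poly_Mapping.single \<mu> c * Poly_Mapping.single th (lc le (fst g) / lc le (fst h))"
    using assms by (simp_all add: mult_single)
  then show ?thesis unfolding spoly_eq by (simp add: algebra_simps)
qed

end

locale labeled_basis = term_orders m le mle
  for m :: nat and le :: "'v pp \<Rightarrow> 'v pp \<Rightarrow> bool" and mle :: "'v pp \<times> nat \<Rightarrow> 'v pp \<times> nat \<Rightarrow> bool" +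
  fixes F :: "('v, 'k::field) mvec" and G :: "('v, 'k) lpoly set"
  assumes labeled: "\<forall>g\<in>G. labeled_in m F g"
    and generators: "\<forall>i<m. (F i, unit_vec i) \<in> G"
    and S_polys_std_rep: "\<forall>g\<in>G. \<forall>h\<in>G. \<forall>tg th. critical_pair m le mle tg g th h \<longrightarrow>
        std_rep m le mle G (spoly le tg g th h)"
begin

lemma vkeys_nonempty: "g \<in> G \<Longrightarrow> fst g \<noteq> 0 \<Longrightarrow> vkeys m (snd g) \<noteq> {}"
  using labeled vkeys_label_nonempty by blast

fun admissible :: "'v pp \<times> nat \<Rightarrow> ('v, 'k) summand \<Rightarrow> bool" where
  "admissible U (c, s, g) \<longleftrightarrow> g \<in> G \<and> c \<noteq> 0 \<and> fst g \<noteq> 0 \<and> mle (sig s g) U"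

definition bounded_rep ::
  "'v pp \<times> nat \<Rightarrow> 'v pp \<Rightarrow> ('v, 'k) mpoly \<Rightarrow> ('v, 'k) summand multiset \<Rightarrow> bool" where
  "bounded_rep U T f es \<longleftrightarrow> snd U < m \<and> f = (\<Sum>e\<in>#es. summand_poly e) \<and>
     (\<forall>e\<in>#es. admissible U e \<and> le (summand_lp e) T)"

abbreviation top_summands :: "'v pp \<Rightarrow> ('v, 'k) summand multiset \<Rightarrow> ('v, 'k) summand multiset" where
  "top_summands T es \<equiv> filter_mset (\<lambda>e. summand_lp e = T) es"

lemma lpp_summand_poly: "admissible U e \<Longrightarrow> lpp le (summand_poly e) = Some (summand_lp e)"
  by (cases e) (auto intro: lpp_single_mult)

lemma lp_summand_poly:
  assumes "admissible U e"
  shows "summand_poly e \<noteq> 0" "lp (summand_poly e) = summand_lp e"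
  using lpp_SomeD[OF lpp_summand_poly[OF assms]] by auto

lemma lookup_summand_poly_lp: "admissible U e \<Longrightarrow> Poly_Mapping.lookup (summand_poly e) (summand_lp e) \<noteq> 0"
  using lp_in_keys[OF lp_summand_poly(1)] lp_summand_poly(2) unfolding in_keys_iff by metis

lemma lookup_summand_poly_above:
  assumes "admissible U e" "le (summand_lp e) T" "summand_lp e \<noteq> T"
  shows "Poly_Mapping.lookup (summand_poly e) T = 0"
proof (rule ccontr)
  assume "Poly_Mapping.lookup (summand_poly e) T \<noteq> 0"
  then have "le T (lp (summand_poly e))" by (simp add: key_le_lp in_keys_iff)
  then have "le T (summand_lp e)" using lp_summand_poly[OF assms(1)] by simp
  then show False using assms(2,3) ple_antisym by blast
qed

lemma bounded_rep_lookup: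
  assumes "bounded_rep U T f es"
  shows "Poly_Mapping.lookup f T = (\<Sum>e\<in>#top_summands T es. Poly_Mapping.lookup (summand_poly e) T)"
proof -
  have f: "f = (\<Sum>e\<in>#es. summand_poly e)" using assms unfolding bounded_rep_def by blast
  have "(\<Sum>e\<in>#filter_mset (\<lambda>e. summand_lp e \<noteq> T) es. Poly_Mapping.lookup (summand_poly e) T) = 0"
  proof (intro sum_mset.neutral ballI)
    fix x assume "x \<in># image_mset (\<lambda>e. Poly_Mapping.lookup (summand_poly e) T)
        (filter_mset (\<lambda>e. summand_lp e \<noteq> T) es)"
    then obtain e where "e \<in># es" "summand_lp e \<noteq> T" "x = Poly_Mapping.lookup (summand_poly e) T" by auto
    then show "x = 0" using assms lookup_summand_poly_above unfolding bounded_rep_def by blast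
  qed
  moreover have "Poly_Mapping.lookup f T = (\<Sum>e\<in>#es. Poly_Mapping.lookup (summand_poly e) T)"
    unfolding f by (rule lookup_sum_mset)
  ultimately show ?thesis
    using sum_mset_filter_split[where f = "\<lambda>e. Poly_Mapping.lookup (summand_poly e) T" and M = es
        and P = "\<lambda>e. summand_lp e = T"] by simp
qed

lemma bounded_rep_lp_le:
  assumes "bounded_rep U T f es" "f \<noteq> 0"
  shows "le (lp f) T"
proof -
  have f: "f = (\<Sum>e\<in>#es. summand_poly e)" using assms(1) unfolding bounded_rep_def by blast
  have "Poly_Mapping.lookup f (lp f) = (\<Sum>e\<in>#es. Poly_Mapping.lookup (summand_poly e) (lp f))"
    using lookup_sum_mset[of summand_poly es "lp f"] f by simp
  moreover have "Poly_Mapping.lookup f (lp f) \<noteq> 0" using assms(2) lp_in_keys by (simp add: in_keys_iff)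
  ultimately have "(\<Sum>e\<in>#es. Poly_Mapping.lookup (summand_poly e) (lp f)) \<noteq> 0" by simp
  then have "\<not> (\<forall>x\<in>#image_mset (\<lambda>e. Poly_Mapping.lookup (summand_poly e) (lp f)) es. x = 0)"
    using sum_mset.neutral by blast
  then obtain e where e: "e \<in># es" "Poly_Mapping.lookup (summand_poly e) (lp f) \<noteq> 0" by auto
  have "admissible U e" using assms(1) e(1) unfolding bounded_rep_def by blast
  then have "le (lp f) (summand_lp e)"
    using e(2) key_le_lp lp_summand_poly by (metis in_keys_iff)
  then show ?thesis using assms(1) e(1) ple_trans unfolding bounded_rep_def by blast
qed

lemma bounded_rep_max:
  assumes "snd U < m" "f \<noteq> 0" "f = (\<Sum>e\<in>#es. summand_poly e)" "\<forall>e\<in>#es. admissible U e"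
  shows "\<exists>e\<in>#es. bounded_rep U (summand_lp e) f es"
proof -
  have "summand_lp ` set_mset es \<noteq> {}" using assms(2,3) by auto
  then obtain T where "T \<in> summand_lp ` set_mset es" "\<forall>y\<in>summand_lp ` set_mset es. le y T"
    using finite_total_max[OF finite_imageI[OF finite_set_mset], of summand_lp es le] ple_total ple_trans
    by blast
  then show ?thesis using assms unfolding bounded_rep_def by auto
qed

lemma bounded_rep_lower:
  assumes "bounded_rep U T f es" "f \<noteq> 0" "top_summands T es = {#}"
  obtains T' where "le T' T" "T' \<noteq> T" "bounded_rep U T' f es"
proof -
  obtain e where e: "e \<in># es" "bounded_rep U (summand_lp e) f es"
    using bounded_rep_max assms(1,2) unfolding bounded_rep_def by blast
  moreover have "summand_lp e \<noteq> T"
  proof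
    assume "summand_lp e = T"
    then have "e \<in># top_summands T es" using e(1) by simp
    then show False using assms(3) by simp
  qed
  ultimately show ?thesis using assms(1) that unfolding bounded_rep_def by blast
qed

lemma std_rep_expansion:
  assumes "std_rep m le mle G S" "\<forall>x\<in>Poly_Mapping.keys (fst S). le x L \<and> x \<noteq> L"
    and "vkeys m (snd S) \<noteq> {} \<Longrightarrow> mle (vlp (snd S)) (sig t g)" "vkeys m (snd g) \<noteq> {}"
    and "mle (sig (\<mu> + t) g) U" "snd U < m" "c \<noteq> 0"
  obtains N where "Poly_Mapping.single \<mu> c * fst S = (\<Sum>e\<in>#N. summand_poly e)"
    and "\<forall>e\<in>#N. admissible U e \<and> le (summand_lp e) (\<mu> + L) \<and> summand_lp e \<noteq> \<mu> + L"
proof -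
  obtain ps where ps: "\<forall>(q, h)\<in>set ps. h \<in> G \<and> ole le (lpp le (q * fst h)) (lpp le (fst S)) \<and>
        ole mle (vlpp m mle (vmult q (snd h))) (vlpp m mle (snd S))"
      "fst S = (\<Sum>(q, h)\<leftarrow>ps. q * fst h)"
    using assms(1) unfolding std_rep_def by auto
  have expansion: "admissible U e \<and> le (summand_lp e) (\<mu> + L) \<and> summand_lp e \<noteq> \<mu> + L"
    if e: "e \<in># monomial_expansion \<mu> c ps" for e
  proof -
    obtain q h r where qhr: "(q, h) \<in> set ps" "fst h \<noteq> 0" "r \<in> Poly_Mapping.keys q"
        "e = (c * Poly_Mapping.lookup q r, \<mu> + r, h)"
      using in_monomial_expansion[OF e] by blast
    have "case (q, h) of (p, gv) \<Rightarrow> gv \<in> G \<and> ole le (lpp le (p * fst gv)) (lpp le (fst S)) \<and>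
        ole mle (vlpp m mle (vmult p (snd gv))) (vlpp m mle (snd S))"
      using ps(1) qhr(1) by (rule bspec)
    then have h: "h \<in> G" "ole le (lpp le (q * fst h)) (lpp le (fst S))"
        "ole mle (vlpp m mle (vmult q (snd h))) (vlpp m mle (snd S))"
      by simp_all
    have "le (r + lp (fst h)) L \<and> r + lp (fst h) \<noteq> L"
      using std_rep_term_lp_below[OF qhr(2,3) h(2) assms(2)] .
    then have lp: "le (summand_lp e) (\<mu> + L) \<and> summand_lp e \<noteq> \<mu> + L"
      using ple_add qhr(4) by (auto simp: add.assoc)
    have vh: "vkeys m (snd h) \<noteq> {}" using vkeys_nonempty h(1) qhr(2) .
    have "mle (sig r h) (sig t g)"
      using std_rep_term_sig_below[OF vh qhr(3) h(3) assms(3) snd_sig_less[OF assms(4)]] .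
    then have "mle (sig (\<mu> + r) h) (sig (\<mu> + t) g)" by (rule sig_add[OF vh assms(4)])
    then have "mle (sig (\<mu> + r) h) U"
      using mle_trans[OF snd_sig_less[OF vh] snd_sig_less[OF assms(4)] assms(6)] assms(5) by blast
    moreover have "c * Poly_Mapping.lookup q r \<noteq> 0" using assms(7) qhr(3) by (simp add: in_keys_iff)
    ultimately show ?thesis using lp h(1) qhr(2,4) by simp
  qed
  show ?thesis
  proof (rule that)
    show "Poly_Mapping.single \<mu> c * fst S = (\<Sum>e\<in>#monomial_expansion \<mu> c ps. summand_poly e)"
      unfolding sum_monomial_expansion ps(2) ..
  qed (use expansion in blast)
qed

lemma top_summand_rewrite:
  assumes adm1: "admissible U (c1, s1, g1)" and adm2: "admissible U (c2, s2, g2)" and U: "snd U < m"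
    and top1: "s1 + lp (fst g1) = T" and top2: "s2 + lp (fst g2) = T"
    and oriented: "mle (sig (cofactor g2 g1) g2) (sig (cofactor g1 g2) g1)"
  obtains N where
    "summand_poly (c1, s1, g1) =
       (\<Sum>e\<in>#N. summand_poly e) + summand_poly (c1 * (lc le (fst g1) / lc le (fst g2)), s2, g2)"
    and "\<forall>e\<in>#N. admissible U e \<and> le (summand_lp e) T \<and> summand_lp e \<noteq> T"
proof -
  have g1: "g1 \<in> G" "c1 \<noteq> 0" "fst g1 \<noteq> 0" "mle (sig s1 g1) U"
    and g2: "g2 \<in> G" "fst g2 \<noteq> 0" using adm1 adm2 by simp_all
  have v1: "vkeys m (snd g1) \<noteq> {}" and v2: "vkeys m (snd g2) \<noteq> {}"
    using vkeys_nonempty g1 g2 by blast+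
  define L where "L = pp_lcm (lp (fst g1)) (lp (fst g2))"
  define \<mu> where "\<mu> = T - L"
  have L: "cofactor g1 g2 + lp (fst g1) = L" "cofactor g2 g1 + lp (fst g2) = L"
    using cofactor_add_lp[of g1 g2] cofactor_add_lp[of g2 g1] pp_lcm_commute[of "lp (fst g2)"]
    unfolding L_def by simp_all
  have \<mu>1: "\<mu> + cofactor g1 g2 = s1"
    using pp_common_multiple_cofactor[of s1 "lp (fst g1)" s2 "lp (fst g2)"] top1 top2
    by (simp add: \<mu>_def L_def cofactor_def)
  have \<mu>2: "\<mu> + cofactor g2 g1 = s2"
    using pp_common_multiple_cofactor[of s2 "lp (fst g2)" s1 "lp (fst g1)"] top1 top2
    by (simp add: \<mu>_def L_def cofactor_def pp_lcm_commute[of "lp (fst g1)"])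
  have \<mu>L: "\<mu> + L = T" unfolding L(1)[symmetric] using \<mu>1 top1 by (simp add: add.assoc[symmetric])
  define S where "S = spoly le (cofactor g1 g2) g1 (cofactor g2 g1) g2"
  have "std_rep m le mle G S"
    using S_polys_std_rep critical_pair_cofactors[OF g1(3) g2(2) v1 v2 oriented] g1(1) g2(1)
    unfolding S_def by blast
  moreover have "\<forall>x\<in>Poly_Mapping.keys (fst S). le x L \<and> x \<noteq> L"
    using spoly_keys_below[OF g1(3) g2(2) L] unfolding S_def by blast
  moreover have "vkeys m (snd S) \<noteq> {} \<Longrightarrow> mle (vlp (snd S)) (sig (cofactor g1 g2) g1)"
    using spoly_vlp_le[OF v1 v2 oriented] unfolding S_def .
  moreover have "mle (sig (\<mu> + cofactor g1 g2) g1) U" using \<mu>1 g1(4) by simp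
  ultimately obtain N where N: "Poly_Mapping.single \<mu> c1 * fst S = (\<Sum>e\<in>#N. summand_poly e)"
      "\<forall>e\<in>#N. admissible U e \<and> le (summand_lp e) (\<mu> + L) \<and> summand_lp e \<noteq> \<mu> + L"
    using std_rep_expansion[OF _ _ _ v1 _ U g1(2)] by blast
  show ?thesis
  proof (rule that)
    show "summand_poly (c1, s1, g1) =
        (\<Sum>e\<in>#N. summand_poly e) + summand_poly (c1 * (lc le (fst g1) / lc le (fst g2)), s2, g2)"
      using summand_spoly_decomp[OF \<mu>1 \<mu>2, where c = c1 and g = g1 and h = g2] N(1)
      unfolding S_def by simp
  qed (use N(2) \<mu>L in simp)
qed

lemma bounded_rep_reduce_pair:
  assumes rep: "bounded_rep U T f (add_mset (c1, s1, g1) (add_mset (c2, s2, g2) rest))"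
    and top1: "s1 + lp (fst g1) = T" and top2: "s2 + lp (fst g2) = T"
    and oriented: "mle (sig (cofactor g2 g1) g2) (sig (cofactor g1 g2) g1)"
  shows "\<exists>es'. bounded_rep U T f es' \<and>
    size (top_summands T es') < size (top_summands T (add_mset (c1, s1, g1) (add_mset (c2, s2, g2) rest)))"
proof -
  have U: "snd U < m" and rest: "\<forall>e\<in>#rest. admissible U e \<and> le (summand_lp e) T"
    and f: "f = summand_poly (c1, s1, g1) + summand_poly (c2, s2, g2) + (\<Sum>e\<in>#rest. summand_poly e)"
    and adm1: "admissible U (c1, s1, g1)" and adm2: "admissible U (c2, s2, g2)"
    using rep unfolding bounded_rep_def by (auto simp: add.assoc)
  define k where "k = lc le (fst g1) / lc le (fst g2)"
  obtain N where N: "summand_poly (c1, s1, g1) = (\<Sum>e\<in>#N. summand_poly e) + summand_poly (c1 * k, s2, g2)"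
      "\<forall>e\<in>#N. admissible U e \<and> le (summand_lp e) T \<and> summand_lp e \<noteq> T"
    using top_summand_rewrite[OF adm1 adm2 U top1 top2 oriented] unfolding k_def by blast
  define E where "E = (if c1 * k + c2 = 0 then {#} else {#(c1 * k + c2, s2, g2)#})"
  have "f = (\<Sum>e\<in>#rest + E + N. summand_poly e)"
  proof -
    have "summand_poly (c1 * k, s2, g2) + summand_poly (c2, s2, g2) = summand_poly (c1 * k + c2, s2, g2)"
      by (simp add: single_add distrib_right)
    then have "(\<Sum>e\<in>#E. summand_poly e) = summand_poly (c1 * k, s2, g2) + summand_poly (c2, s2, g2)"
      unfolding E_def by auto
    then show ?thesis using f N(1) by (simp add: add_ac)
  qed
  moreover have "\<forall>e\<in>#rest + E + N. admissible U e \<and> le (summand_lp e) T"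
  proof -
    have "admissible U (c1 * k + c2, s2, g2) \<or> c1 * k + c2 = 0" using adm2 by simp
    then have "\<forall>e\<in>#E. admissible U e \<and> le (summand_lp e) T" using top2 ple_refl unfolding E_def by auto
    then show ?thesis using rest N(2) by auto
  qed
  moreover have "size (top_summands T (rest + E + N)) <
      size (top_summands T (add_mset (c1, s1, g1) (add_mset (c2, s2, g2) rest)))"
  proof -
    have no_top: "top_summands T N = {#}" using N(2) by (auto simp: filter_empty_mset)
    have "size (top_summands T E) \<le> 1" unfolding E_def by auto
    then show ?thesis using top1 top2 by (simp add: no_top)
  qed
  ultimately show ?thesis using U unfolding bounded_rep_def by blast
qed

lemma bounded_rep_reduce_top:
  assumes rep: "bounded_rep U T f es" and "f \<noteq> 0" "lp f \<noteq> T" "top_summands T es \<noteq> {#}"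
  shows "\<exists>es'. bounded_rep U T f es' \<and> size (top_summands T es') < size (top_summands T es)"
proof -
  have "Poly_Mapping.lookup f T = 0"
  proof (rule ccontr)
    assume "Poly_Mapping.lookup f T \<noteq> 0"
    then have "le T (lp f)" by (simp add: key_le_lp in_keys_iff)
    then show False using bounded_rep_lp_le[OF rep \<open>f \<noteq> 0\<close>] \<open>lp f \<noteq> T\<close> ple_antisym by blast
  qed
  then have "(\<Sum>e\<in>#top_summands T es. Poly_Mapping.lookup (summand_poly e) T) = 0"
    using bounded_rep_lookup[OF rep] by simp
  moreover have "Poly_Mapping.lookup (summand_poly e) T \<noteq> 0" if "e \<in># es" "summand_lp e = T" for e
  proof -
    have "admissible U e" using rep that(1) unfolding bounded_rep_def by blast
    then show ?thesis using lookup_summand_poly_lp that(2) by blast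
  qed
  ultimately obtain e1 e2 rest where es: "es = add_mset e1 (add_mset e2 rest)"
      and top: "summand_lp e1 = T" "summand_lp e2 = T"
    using two_elements_of_zero_sum[OF _ assms(4)] by blast
  obtain c1 s1 g1 c2 s2 g2 where e: "e1 = (c1, s1, g1)" "e2 = (c2, s2, g2)"
    by (cases e1, cases e2) auto
  have rep12: "bounded_rep U T f (add_mset (c1, s1, g1) (add_mset (c2, s2, g2) rest))"
    and rep21: "bounded_rep U T f (add_mset (c2, s2, g2) (add_mset (c1, s1, g1) rest))"
    using rep unfolding es e by (simp_all add: add_mset_commute)
  then have "vkeys m (snd g1) \<noteq> {}" "vkeys m (snd g2) \<noteq> {}"
    using vkeys_nonempty unfolding bounded_rep_def by auto
  then have "mle (sig (cofactor g2 g1) g2) (sig (cofactor g1 g2) g1) \<or>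
      mle (sig (cofactor g1 g2) g1) (sig (cofactor g2 g1) g2)"
    using mle_total snd_sig_less by blast
  moreover have "s1 + lp (fst g1) = T" "s2 + lp (fst g2) = T" using top unfolding e by simp_all
  ultimately show ?thesis
    using bounded_rep_reduce_pair[OF rep12] bounded_rep_reduce_pair[OF rep21]
    unfolding es e by (auto simp: add_mset_commute)
qed

lemma bounded_rep_descend:
  assumes "bounded_rep U T f es" "f \<noteq> 0"
  shows "\<exists>es'. bounded_rep U (lp f) f es'"
  using wf_ple_strict assms(1)
proof (induction T arbitrary: es rule: wf_induct_rule)
  case (less T)
  note lower_T = less.IH
  from less.prems show ?case
  proof (induction es rule: measure_induct_rule[of "\<lambda>es. size (top_summands T es)"])
    case (less es)
    show ?case
    proof (cases "lp f = T")
      case True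
      then show ?thesis using less.prems by blast
    next
      case False
      show ?thesis
      proof (cases "top_summands T es = {#}")
        case True
        obtain T' where "le T' T" "T' \<noteq> T" "bounded_rep U T' f es"
          using bounded_rep_lower[OF less.prems assms(2) True] by blast
        then show ?thesis using lower_T by blast
      next
        case False
        then obtain es' where "bounded_rep U T f es'" "size (top_summands T es') < size (top_summands T es)"
          using bounded_rep_reduce_top[OF less.prems assms(2) \<open>lp f \<noteq> T\<close>] by blast
        then show ?thesis using less.IH by blast
      qed
    qed
  qed
qed

lemma vlp_unit_vec: "i < m \<Longrightarrow> vlp (unit_vec i :: ('v, 'k) mvec) = (0, i)"
  unfolding vlp_def using vlpp_eqI[of "(0, i)" "unit_vec i :: ('v, 'k) mvec"] mle_refl
  by (simp add: vkeys_unit_vec)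

lemma bounded_rep_initial:
  assumes "labeled_in m F fu" "fst fu \<noteq> 0"
  shows "\<exists>T es. bounded_rep (vlp (snd fu)) T (fst fu) es"
proof -
  have vk: "vkeys m (snd fu) \<noteq> {}" using vkeys_label_nonempty[OF assms] .
  define ps where "ps = map (\<lambda>i. (snd fu i, (F i, unit_vec i :: ('v, 'k) mvec))) [0..<m]"
  have "(\<Sum>(q, h)\<leftarrow>ps. q * fst h) = (\<Sum>i<m. snd fu i * F i)"
    unfolding ps_def by (simp add: o_def sum_set_upt_conv_sum_list_nat[symmetric] atLeast0LessThan)
  then have sum: "fst fu = (\<Sum>e\<in>#monomial_expansion 0 1 ps. summand_poly e)"
    using assms(1) unfolding sum_monomial_expansion labeled_in_def by simp
  have "admissible (vlp (snd fu)) e" if e: "e \<in># monomial_expansion 0 1 ps" for e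
  proof -
    obtain q h r where qhr: "(q, h) \<in> set ps" "fst h \<noteq> 0" "r \<in> Poly_Mapping.keys q"
        "e = (1 * Poly_Mapping.lookup q r, 0 + r, h)"
      using in_monomial_expansion[OF e] by blast
    then obtain i where i: "i < m" "q = snd fu i" "h = (F i, unit_vec i)" unfolding ps_def by auto
    then have "(r, i) \<in> vkeys m (snd fu)" using qhr(3) unfolding vkeys_def by simp
    then have "mle (sig r h) (vlp (snd fu))" using vlp_max[OF vk] i vlp_unit_vec unfolding sig_def by simp
    then show ?thesis using qhr i generators by (simp add: in_keys_iff)
  qed
  then show ?thesis using bounded_rep_max[OF snd_vlp_less[OF vk] assms(2) sum] by blast
qed

lemma bounded_rep_top_summand:
  assumes "bounded_rep U (lp f) f es" "f \<noteq> 0"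
  obtains c s g where "(c, s, g) \<in># es" "s + lp (fst g) = lp f"
proof -
  have "top_summands (lp f) es \<noteq> {#}"
  proof
    assume no_top: "top_summands (lp f) es = {#}"
    have "Poly_Mapping.lookup f (lp f) =
        (\<Sum>e\<in>#top_summands (lp f) es. Poly_Mapping.lookup (summand_poly e) (lp f))"
      by (rule bounded_rep_lookup[OF assms(1)])
    also have "\<dots> = 0" unfolding no_top by simp
    finally show False using lp_in_keys[OF assms(2)] by (simp add: in_keys_iff)
  qed
  then obtain e where "e \<in># top_summands (lp f) es" by (rule multiset_nonemptyE)
  then show ?thesis using that by (cases e) auto
qed

theorem labeled_Groebner_basis: "labeled_GB m le mle F G"
  unfolding labeled_GB_def
proof (intro allI impI)
  fix fu assume fu: "labeled_in m F fu" "fst fu \<noteq> 0"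
  obtain T es where "bounded_rep (vlp (snd fu)) T (fst fu) es" using bounded_rep_initial[OF fu] by blast
  then obtain es where rep: "bounded_rep (vlp (snd fu)) (lp (fst fu)) (fst fu) es"
    using bounded_rep_descend fu(2) by blast
  then obtain c s g where e: "(c, s, g) \<in># es" "s + lp (fst g) = lp (fst fu)"
    using bounded_rep_top_summand fu(2) by blast
  then have g: "g \<in> G" "fst g \<noteq> 0" "mle (sig s g) (vlp (snd fu))"
    using rep unfolding bounded_rep_def by auto
  have "lp (fst fu) - lp (fst g) = s" using e(2) by (metis add_diff_cancel_right')
  moreover have "pp_dvd (lp (fst g)) (lp (fst fu))" unfolding pp_dvd_def using e(2) by (metis add.commute)
  moreover have "ole mle (vlpp m mle (vmult (ppoly s) (snd g))) (vlpp m mle (snd fu))"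
    using vlpp_ppoly_mult[OF vkeys_nonempty[OF g(1,2)]] vlpp_vlp[OF vkeys_label_nonempty[OF fu]] g(3)
    by (simp add: ole_def)
  ultimately show "\<exists>gv\<in>G. fst gv \<noteq> 0 \<and> pp_dvd (the (lpp le (fst gv))) (the (lpp le (fst fu))) \<and>
      ole mle (vlpp m mle (vmult (ppoly (the (lpp le (fst fu)) - the (lpp le (fst gv)))) (snd gv)))
        (vlpp m mle (snd fu))"
    using g unfolding lp_def by blast
qed

end

theorem lemma5p2:
  fixes m :: nat
    and F :: "('v, 'k::field) mvec"
    and le :: "'v pp \<Rightarrow> 'v pp \<Rightarrow> bool"
    and mle :: "'v pp \<times> nat \<Rightarrow> 'v pp \<times> nat \<Rightarrow> bool"
    and G :: "('v, 'k) lpoly set"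
  assumes "pp_term_order le"
    and "mod_term_order m mle"
    and "finite G"
    and "\<forall>gv\<in>G. labeled_in m F gv"
    and "\<forall>i<m. (F i, unit_vec i) \<in> G"
    and "\<forall>gv\<in>G. \<forall>hw\<in>G. \<forall>tg th. critical_pair m le mle tg gv th hw \<longrightarrow>
            std_rep m le mle G (spoly le tg gv th hw)"
  shows "labeled_GB m le mle F G"
proof -
  interpret labeled_basis m le mle F G
    using assms(1,2,4,5,6) by unfold_locales
  show ?thesis by (rule labeled_Groebner_basis)
qed

end
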